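(* Let $n\ge 3$ and let $(u,v)$ be an MAB pair of binary words with $|u|=|v|=n$, $i=\mathrm{lsb}(u,v)$, $j=\mathrm{lsb}(v,u)$ and $i+j>n$. Write $u=\alpha\gamma\beta$ and $v=\beta'\gamma'\alpha'$ with $|\alpha|=|\alpha'|=n-i$, $|\gamma|=|\gamma'|=i+j-n$ and $|\beta|=|\beta'|=n-j$. Then: (1) $\big||\alpha|_c-|\alpha'|_c\big|=1$ for all $c\in\{a,b\}$ if and only if $\big||\beta|_c-|\beta'|_c\big|=1$ for all $c\in\{a,b\}$; (2) $\big||\beta|_c-|\beta'|_c\big|=1$ for all $c\in\{a,b\}$ if and only if $i+j-n=1$.
   Context: Let $\Sigma=\{a,b\}$. For a word $w$ and a letter $c$, $|w|_c$ denotes the number of occurrences of $c$ in $w$. Two words $x,y$ are abelian equivalent, written $x\sim_{\mathrm{abl}}y$, if $|x|_c=|y|_c$ for all $c\in\Sigma$. For words $u,v$: a pair $(x,y)$ is an internal abelian-border of $(u,v)$ if $x$ is a nonempty proper suffix of $u$, $y$ is a proper prefix of $v$, and $x\sim_{\mathrm{abl}}y$; it is an external abelian-border of $(u,v)$ if $x$ is a nonempty proper prefix of $u$, $y$ is a proper suffix of $v$, and $x\sim_{\mathrm{abl}}y$. The pair $(u,v)$ is mutually abelian-bordered (MAB) if it has both an internal and an external abelian-border, and mutually abelian-unbordered (MAU) if it has neither. If $(u,v)$ has an internal abelian-border, $\mathrm{sb}(u,v)$ denotes its internal abelian-border $(x,y)$ of minimal length and $\mathrm{lsb}(u,v)=|x|$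 is that minimal length. *)

theory Defs
  imports "HOL-Library.Sublist"
begin

datatype letter = a | b

definition abel_eq :: "letter list \<Rightarrow> letter list \<Rightarrow> bool" where
  "abel_eq x y \<longleftrightarrow> (\<forall>c. count_list x c = count_list y c)"

definition internal_border :: "letter list \<Rightarrow> letter list \<Rightarrow> letter list \<Rightarrow> letter list \<Rightarrow> bool" where
  "internal_border u v x y \<longleftrightarrow>
     x \<noteq> [] \<and> strict_suffix x u \<and> strict_prefix y v \<and> abel_eq x y"

definition external_border :: "letter list \<Rightarrow> letter list \<Rightarrow> letter list \<Rightarrow> letter list \<Rightarrow> bool" where
  "external_border u v x y \<longleftrightarrow>
     x \<noteq> [] \<and> strict_prefix x u \<and> strict_suffix y v \<and> abel_eq x y"

definition has_internal_border :: "letter list \<Rightarrow> letter list \<Rightarrow> bool" where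
  "has_internal_border u v \<longleftrightarrow> (\<exists>x y. internal_border u v x y)"

definition has_external_border :: "letter list \<Rightarrow> letter list \<Rightarrow> bool" where
  "has_external_border u v \<longleftrightarrow> (\<exists>x y. external_border u v x y)"

definition MAB :: "letter list \<Rightarrow> letter list \<Rightarrow> bool" where
  "MAB u v \<longleftrightarrow> has_internal_border u v \<and> has_external_border u v"

text \<open>Length of the shortest internal abelian-border (meaningful when one exists).\<close>
definition lsb :: "letter list \<Rightarrow> letter list \<Rightarrow> nat" where
  "lsb u v = (LEAST k. \<exists>x y. internal_border u v x y \<and> length x = k)"

end

(* Let d(m) = imbalance u v m be the number of a's in the length-m suffix of u minus that
   in the length-m prefix of v, and d'(m) = imbalance v u m.  Abelian borders of length m are
   exactly the zeros of d, so i and j are the least positive zeros of d and d'.  Since a prefix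
   and the complementary suffix make up the whole word, d(n - m) = d'(m) + \<delta> with
   \<delta> = |u|_a - |v|_a; hence |\<beta>|_a - |\<beta>'|_a = d(n - j) and |\<alpha>|_a - |\<alpha>'|_a = -d'(n - i)
   both equal \<delta>, which is nonzero as n - j < i.  Across the overlap, t \<mapsto> d'(j - t) walks
   in unit steps from 0 to -\<delta> in i + j - n steps, and minimality of i and j keeps it away from
   0 and -\<delta> strictly in between; when |\<delta>| = 1 this is only possible in a single step.  Over
   {a, b} the b-counts differ by the negatives of the a-counts, so the letter a suffices. *)

theory Submission
  imports Defs
begin

lemma count_list_a_add_b: "count_list xs a + count_list xs b = length xs"
proof (induction xs)
  case (Cons x xs)
  then show ?case by (cases x) auto
qed simp

lemma abel_eq_length: "abel_eq x y \<Longrightarrow> length x = length y"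
  unfolding abel_eq_def by (metis count_list_a_add_b)

lemma abel_eq_iff_count_a:
  "length x = length y \<Longrightarrow> abel_eq x y \<longleftrightarrow> count_list x a = count_list y a"
  unfolding abel_eq_def by (metis add_left_cancel count_list_a_add_b letter.exhaust)

lemma abs_count_diff_eq_one_iff:
  assumes "length x = length y"
  shows "(\<forall>c. \<bar>int (count_list x c) - int (count_list y c)\<bar> = 1) \<longleftrightarrow>
         \<bar>int (count_list x a) - int (count_list y a)\<bar> = 1"
proof -
  have "int (count_list x b) - int (count_list y b) = - (int (count_list x a) - int (count_list y a))"
    using count_list_a_add_b[of x] count_list_a_add_b[of y] assms by linarith
  then show ?thesis by (metis abs_minus_cancel letter.exhaust)
qed

lemma has_internal_border_if_external: "has_external_border u v \<Longrightarrow> has_internal_border v u"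
  unfolding has_external_border_def has_internal_border_def external_border_def internal_border_def
  by (metis abel_eq_def abel_eq_length length_0_conv)

definition imbalance :: "letter list \<Rightarrow> letter list \<Rightarrow> nat \<Rightarrow> int" where
  "imbalance u v m = int (count_list (drop (length u - m) u) a) - int (count_list (take m v) a)"

lemma internal_border_of_length_iff:
  assumes "length u = length v"
  shows "(\<exists>x y. internal_border u v x y \<and> length x = m) \<longleftrightarrow>
         0 < m \<and> m < length u \<and> imbalance u v m = 0"
proof
  assume "\<exists>x y. internal_border u v x y \<and> length x = m"
  then obtain x y where "internal_border u v x y" and m: "length x = m" by blast
  then have ab: "abel_eq x y" and "x \<noteq> []" and sx: "strict_suffix x u" and py: "strict_prefix y v"
    unfolding internal_border_def by auto
  obtain zs where u_split: "u = zs @ x" and "zs \<noteq> []"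
    using sx unfolding strict_suffix_def suffix_def by auto
  obtain ws where v_split: "v = y @ ws" using py unfolding strict_prefix_def prefix_def by auto
  have "length y = m" using abel_eq_length[OF ab] m by simp
  then have "x = drop (length u - m) u" "y = take m v" using u_split v_split m by simp_all
  then show "0 < m \<and> m < length u \<and> imbalance u v m = 0"
    using ab abel_eq_iff_count_a \<open>x \<noteq> []\<close> \<open>zs \<noteq> []\<close> u_split m \<open>length y = m\<close>
    by (auto simp: imbalance_def)
next
  assume m: "0 < m \<and> m < length u \<and> imbalance u v m = 0"
  let ?x = "drop (length u - m) u" and ?y = "take m v"
  have "abel_eq ?x ?y" using m assms abel_eq_iff_count_a[of ?x ?y] by (simp add: imbalance_def)
  moreover have "strict_suffix ?x u"
    using m unfolding strict_suffix_def by (auto simp: suffix_drop dest: arg_cong[of _ _ length])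
  moreover have "strict_prefix ?y v"
    using m assms unfolding strict_prefix_def by (auto simp: take_is_prefix dest: arg_cong[of _ _ length])
  ultimately have "internal_border u v ?x ?y" using m unfolding internal_border_def by auto
  then show "\<exists>x y. internal_border u v x y \<and> length x = m" using m by auto
qed

lemma lsb_eq_Least:
  "length u = length v \<Longrightarrow> lsb u v = (LEAST m. 0 < m \<and> m < length u \<and> imbalance u v m = 0)"
  unfolding lsb_def using internal_border_of_length_iff by presburger

lemma lsb_imbalance:
  assumes "has_internal_border u v" and "length u = length v"
  shows "0 < lsb u v \<and> lsb u v < length u \<and> imbalance u v (lsb u v) = 0"
proof -
  obtain x y where "internal_border u v x y"
    using assms(1) unfolding has_internal_border_def by blast
  then have "0 < length x \<and> length x < length u \<and> imbalance u v (length x) = 0"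
    using internal_border_of_length_iff[OF assms(2)] by blast
  then show ?thesis unfolding lsb_eq_Least[OF assms(2)] by (rule LeastI)
qed

lemma imbalance_nonzero_below_lsb:
  assumes "has_internal_border u v" and "length u = length v" and "0 < m" and "m < lsb u v"
  shows "imbalance u v m \<noteq> 0"
proof -
  have "m < length u" using lsb_imbalance[OF assms(1,2)] assms(4) by simp
  then show ?thesis
    using not_less_Least[of m "\<lambda>m. 0 < m \<and> m < length u \<and> imbalance u v m = 0"] assms
    by (auto simp: lsb_eq_Least)
qed

lemma imbalance_complement:
  assumes "length u = n" and "length v = n" and "m \<le> n"
  shows "imbalance u v (n - m) = imbalance v u m + (int (count_list u a) - int (count_list v a))"
proof -
  have "int (count_list (take k w) a) + int (count_list (drop k w) a) = int (count_list w a)" for k w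
    by (metis append_take_drop_id count_list_append of_nat_add)
  then show ?thesis using assms unfolding imbalance_def by (simp add: algebra_simps)
qed

lemma abs_imbalance_Suc_le:
  assumes "length u = length v" and "m < length u"
  shows "\<bar>imbalance u v (Suc m) - imbalance u v m\<bar> \<le> 1"
proof -
  have "drop (length u - Suc m) u = u ! (length u - Suc m) # drop (length u - m) u"
    using assms(2) Cons_nth_drop_Suc[of "length u - Suc m" u] by (simp add: Suc_diff_Suc)
  moreover have "take (Suc m) v = take m v @ [v ! m]"
    using assms by (simp add: take_Suc_conv_app_nth)
  ultimately show ?thesis unfolding imbalance_def by auto
qed

lemma unit_step_walk_revisits:
  fixes h :: "nat \<Rightarrow> int"
  assumes step: "\<And>t. t < k \<Longrightarrow> \<bar>h (Suc t) - h t\<bar> \<le> 1"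
    and start: "h 0 = 0" and final: "\<bar>h k\<bar> = 1" and "2 \<le> k"
  shows "\<exists>t. 0 < t \<and> t < k \<and> (h t = 0 \<or> h t = h k)"
proof (cases "h 1 = 0 \<or> h 1 = h k")
  case True
  then show ?thesis using \<open>2 \<le> k\<close> by auto
next
  case False
  then have h1: "h 1 = - h k" using step[of 0] start final \<open>2 \<le> k\<close> by auto
  define g where "g t = h k * h t" for t
  have "\<bar>g (Suc t) - g t\<bar> \<le> 1" if "t < k" for t
    using step[OF that] final by (simp add: g_def abs_mult flip: right_diff_distrib)
  moreover have "h k * h k = 1" using final abs_mult_self_eq[of "h k"] by simp
  then have "g 1 = -1" "g k = 1" using h1 by (simp_all add: g_def)
  ultimately obtain t where "1 \<le> t" "t \<le> k" "g t = 0"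
    using nat_intermed_int_val[of 1 k g 0] \<open>2 \<le> k\<close> by auto
  then have "h t = 0" using final by (auto simp: g_def)
  moreover have "t \<noteq> k" using \<open>h t = 0\<close> final by auto
  ultimately show ?thesis using \<open>1 \<le> t\<close> \<open>t \<le> k\<close> by (intro exI[of _ t]) auto
qed

lemma imbalance_complement_lsb:
  assumes "has_internal_border v u" and "length u = n" and "length v = n"
  shows "imbalance u v (n - lsb v u) = int (count_list u a) - int (count_list v a)"
  using imbalance_complement[OF assms(2,3), of "lsb v u"] lsb_imbalance[OF assms(1)] assms(2,3)
  by simp

lemma abs_count_diff_eq_one_iff_overlap_one:
  assumes hi: "has_internal_border u v" and hj: "has_internal_border v u"
    and u: "length u = n" and v: "length v = n" and overlap: "n < lsb u v + lsb v u"
  shows "\<bar>int (count_list u a) - int (count_list v a)\<bar> = 1 \<longleftrightarrow> lsb u v + lsb v u - n = 1"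
proof -
  define i j where "i = lsb u v" and "j = lsb v u"
  define k where "k = i + j - n"
  have "n < i + j" using overlap by (simp add: i_def j_def)
  define \<delta> where "\<delta> = int (count_list u a) - int (count_list v a)"
  have i: "0 < i" "i < n" and j: "0 < j" "j < n"
    using lsb_imbalance[OF hi] lsb_imbalance[OF hj] u v by (simp_all add: i_def j_def)
  have "imbalance u v (n - j) \<noteq> 0"
    using imbalance_nonzero_below_lsb[OF hi] u v overlap j by (simp add: i_def j_def)
  then have "\<delta> \<noteq> 0" using imbalance_complement_lsb[OF hj u v] by (simp add: j_def \<delta>_def)
  define h where "h t = imbalance v u (j - t)" for t
  have h0: "h 0 = 0" using lsb_imbalance[OF hj] u v by (simp add: h_def j_def)
  have hk: "h k = - \<delta>"
    using imbalance_complement_lsb[OF hi v u] overlap by (simp add: h_def \<delta>_def i_def j_def k_def)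
  have h_step: "\<bar>h (Suc t) - h t\<bar> \<le> 1" if "t < k" for t
  proof -
    have "j - t = Suc (j - Suc t)" "j - Suc t < length v" using that k_def i j v by auto
    then show ?thesis
      using abs_imbalance_Suc_le[of v u "j - Suc t"] u v by (simp add: h_def abs_minus_commute)
  qed
  have h_avoids: "h t \<noteq> 0 \<and> h t \<noteq> - \<delta>" if "0 < t" "t < k" for t
  proof -
    have "imbalance v u (j - t) \<noteq> 0"
      using imbalance_nonzero_below_lsb[OF hj, of "j - t", folded j_def] that i u v k_def by auto
    moreover have "imbalance u v (n - (j - t)) \<noteq> 0"
      using imbalance_nonzero_below_lsb[OF hi, of "n - (j - t)", folded i_def] that j u v k_def
      by auto
    ultimately show ?thesis
      using imbalance_complement[OF u v, of "j - t"] j by (simp add: h_def \<delta>_def)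
  qed
  have "\<bar>\<delta>\<bar> = 1 \<longleftrightarrow> k = 1"
  proof (cases "k = 1")
    case True
    then show ?thesis using h_step[of 0] h0 hk \<open>\<delta> \<noteq> 0\<close> by auto
  next
    case False
    then have "2 \<le> k" using \<open>n < i + j\<close> k_def by simp
    then show ?thesis using unit_step_walk_revisits[of k h] h_step h0 hk h_avoids False by fastforce
  qed
  then show ?thesis by (simp add: \<delta>_def k_def i_def j_def)
qed

theorem mainTheorem5:
  fixes u v \<alpha> \<gamma> \<beta> \<alpha>' \<gamma>' \<beta>' :: "letter list" and n i j :: nat
  assumes "n \<ge> 3"
    and "MAB u v"
    and "length u = n" and "length v = n"
    and "i = lsb u v" and "j = lsb v u"
    and "i + j > n"
    and "u = \<alpha> @ \<gamma> @ \<beta>" and "v = \<beta>' @ \<gamma>' @ \<alpha>'"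
    and "length \<alpha> = n - i" and "length \<alpha>' = n - i"
    and "length \<gamma> = i + j - n" and "length \<gamma>' = i + j - n"
    and "length \<beta> = n - j" and "length \<beta>' = n - j"
  shows "((\<forall>c. \<bar>int (count_list \<alpha> c) - int (count_list \<alpha>' c)\<bar> = 1) \<longleftrightarrow>
          (\<forall>c. \<bar>int (count_list \<beta> c) - int (count_list \<beta>' c)\<bar> = 1))
       \<and> ((\<forall>c. \<bar>int (count_list \<beta> c) - int (count_list \<beta>' c)\<bar> = 1) \<longleftrightarrow> i + j - n = 1)"
proof -
  have hi: "has_internal_border u v" and hj: "has_internal_border v u"
    using assms(2) has_internal_border_if_external unfolding MAB_def by auto
  have "i < n" "j < n" using lsb_imbalance[OF hi] lsb_imbalance[OF hj] assms(3-6) by auto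
  have "imbalance u v (n - j) = int (count_list \<beta> a) - int (count_list \<beta>' a)"
    using assms(3,8,9,14,15) by (simp add: imbalance_def)
  moreover have "imbalance v u (n - i) = int (count_list \<alpha>' a) - int (count_list \<alpha> a)"
    using assms(4,8-11) \<open>i < n\<close> by (simp add: imbalance_def)
  ultimately have
    "int (count_list \<alpha> a) - int (count_list \<alpha>' a) = int (count_list u a) - int (count_list v a)"
    "int (count_list \<beta> a) - int (count_list \<beta>' a) = int (count_list u a) - int (count_list v a)"
    using imbalance_complement_lsb[OF hj assms(3,4)] imbalance_complement_lsb[OF hi assms(4,3)]
    by (simp_all add: assms(5,6))
  then show ?thesis
    using abs_count_diff_eq_one_iff[of \<alpha> \<alpha>'] abs_count_diff_eq_one_iff[of \<beta> \<beta>']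
      abs_count_diff_eq_one_iff_overlap_one[OF hi hj assms(3,4)] assms(5-7,10,11,14,15)
    by simp
qed

end
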